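(* Let $G$ be a connected graph with $\chi(G)=2$. If $P_\ell(G,2)\ge 1$, then $K_1\vee G$ is weakly enumeratively chromatic-choosable.
   Context: $K_1\vee G$ is the join: a new vertex adjacent to every vertex of $G$. For a list assignment $L$, $P(H,L)$ is the number of proper $L$-colorings of $H$; an $m$-assignment has all lists of size $m$; $P(H,m)$ is the chromatic polynomial, and the list color function $P_\ell(H,m)$ is the minimum of $P(H,L)$ over all $m$-assignments $L$. A graph $H$ is weakly enumeratively chromatic-choosable if $P_\ell(H,\chi(H))=P(H,\chi(H))$. *)

theory Defs
  imports Main "HOL-Library.FuncSet"
begin

definition graph :: "'a set \<Rightarrow> ('a \<Rightarrow> 'a \<Rightarrow> bool) \<Rightarrow> bool" where
  "graph V E \<longleftrightarrow> finite V \<and> (\<forall>u v. E u v \<longrightarrow> u \<in> V \<and> v \<in> V \<and> u \<noteq> v \<and> E v u)"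

definition connected_graph :: "'a set \<Rightarrow> ('a \<Rightarrow> 'a \<Rightarrow> bool) \<Rightarrow> bool" where
  "connected_graph V E \<longleftrightarrow> V \<noteq> {} \<and> (\<forall>u\<in>V. \<forall>v\<in>V. E\<^sup>*\<^sup>* u v)"

definition proper_L_colorings :: "'a set \<Rightarrow> ('a \<Rightarrow> 'a \<Rightarrow> bool) \<Rightarrow> ('a \<Rightarrow> nat set) \<Rightarrow> ('a \<Rightarrow> nat) set" where
  "proper_L_colorings V E L = {f \<in> PiE V L. \<forall>u v. E u v \<longrightarrow> f u \<noteq> f v}"

definition num_L_colorings :: "'a set \<Rightarrow> ('a \<Rightarrow> 'a \<Rightarrow> bool) \<Rightarrow> ('a \<Rightarrow> nat set) \<Rightarrow> nat" where
  "num_L_colorings V E L = card (proper_L_colorings V E L)"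

definition m_assignment :: "'a set \<Rightarrow> ('a \<Rightarrow> nat set) \<Rightarrow> nat \<Rightarrow> bool" where
  "m_assignment V L m \<longleftrightarrow> (\<forall>v\<in>V. finite (L v) \<and> card (L v) = m)"

definition chrom_poly :: "'a set \<Rightarrow> ('a \<Rightarrow> 'a \<Rightarrow> bool) \<Rightarrow> nat \<Rightarrow> nat" where
  "chrom_poly V E m = num_L_colorings V E (\<lambda>_. {0..<m})"

definition list_color_fun :: "'a set \<Rightarrow> ('a \<Rightarrow> 'a \<Rightarrow> bool) \<Rightarrow> nat \<Rightarrow> nat" where
  "list_color_fun V E m = Inf {num_L_colorings V E L | L. m_assignment V L m}"

definition chromatic_number :: "'a set \<Rightarrow> ('a \<Rightarrow> 'a \<Rightarrow> bool) \<Rightarrow> nat" where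
  "chromatic_number V E = (LEAST k. chrom_poly V E k > 0)"

text \<open>The join K_1 \<or> G: a new vertex None adjacent to every (Some v), v \<in> V.\<close>
definition join_K1_V :: "'a set \<Rightarrow> 'a option set" where
  "join_K1_V V = insert None (Some ` V)"

definition join_K1_E :: "'a set \<Rightarrow> ('a \<Rightarrow> 'a \<Rightarrow> bool) \<Rightarrow> 'a option \<Rightarrow> 'a option \<Rightarrow> bool" where
  "join_K1_E V E x y = (case (x, y) of
       (Some u, Some v) \<Rightarrow> E u v
     | (None, Some v) \<Rightarrow> v \<in> V
     | (Some u, None) \<Rightarrow> u \<in> V
     | (None, None) \<Rightarrow> False)"

definition weakly_ecc :: "'a set \<Rightarrow> ('a \<Rightarrow> 'a \<Rightarrow> bool) \<Rightarrow> bool" where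
  "weakly_ecc V E \<longleftrightarrow>
     list_color_fun V E (chromatic_number V E) = chrom_poly V E (chromatic_number V E)"

end

(*
  Colourings of the join H of G with an apex split according to the colour x of the apex, the class
  of x consisting of the colourings of G from the lists L(v) - {x}. For a 3-assignment L these lists
  have at least two colours, so the hypothesis on G gives every class a colouring; it gives two if
  some list avoids x, since that list keeps three colours. Two colourings also exist if another apex
  colour y lies in every list: put y on one side of the bipartition of G and swap the sides. With
  both, a third colouring exists, so summing over the three apex colours yields at least 6. On the
  other hand, a connected bipartite graph has just two colourings from a fixed pair of colours, hence
  P(H,3) <= 3 * 2; and chi(H) = 3 since an edge of G and the apex form a triangle.
*)
theory Submission
  imports Defs
begin

lemma finite_proper_L_colorings:
  "finite V \<Longrightarrow> (\<And>v. v \<in> V \<Longrightarrow> finite (L v)) \<Longrightarrow> finite (proper_L_colorings V E L)"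
  unfolding proper_L_colorings_def by (auto intro: finite_subset[OF _ finite_PiE])

lemma proper_L_colorings_mono:
  "(\<And>v. v \<in> V \<Longrightarrow> L v \<subseteq> L' v) \<Longrightarrow> proper_L_colorings V E L \<subseteq> proper_L_colorings V E L'"
  unfolding proper_L_colorings_def using PiE_mono[of V L L'] by blast

lemma list_color_fun_le:
  "m_assignment V L m \<Longrightarrow> list_color_fun V E m \<le> num_L_colorings V E L"
  unfolding list_color_fun_def by (rule cInf_lower) auto

lemma list_color_fun_eq_chrom_poly_iff:
  "list_color_fun V E m = chrom_poly V E m \<longleftrightarrow>
     (\<forall>L. m_assignment V L m \<longrightarrow> chrom_poly V E m \<le> num_L_colorings V E L)"
proof -
  have "m_assignment V (\<lambda>_. {0..<m}) m"
    by (simp add: m_assignment_def)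
  then have "list_color_fun V E m \<le> chrom_poly V E m"
    unfolding chrom_poly_def by (rule list_color_fun_le)
  moreover have "chrom_poly V E m \<le> list_color_fun V E m"
    if "\<forall>L. m_assignment V L m \<longrightarrow> chrom_poly V E m \<le> num_L_colorings V E L"
    unfolding list_color_fun_def using that \<open>m_assignment V (\<lambda>_. {0..<m}) m\<close>
    by (intro cInf_greatest) auto
  ultimately show ?thesis
    using list_color_fun_le[of V _ m E] by (metis le_antisym)
qed

lemma proper_L_colorings_nonempty:
  assumes "1 \<le> list_color_fun V E m"
    and "\<And>v. v \<in> V \<Longrightarrow> finite (L v) \<and> m \<le> card (L v)"
  shows "proper_L_colorings V E L \<noteq> {}"
proof -
  have "\<forall>v\<in>V. \<exists>T. T \<subseteq> L v \<and> card T = m"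
    using assms(2) by (meson obtain_subset_with_card_n)
  then obtain L' where L': "\<forall>v\<in>V. L' v \<subseteq> L v \<and> card (L' v) = m"
    by (rule bchoice[THEN exE])
  then have "m_assignment V L' m"
    unfolding m_assignment_def using assms(2) finite_subset by blast
  then have "1 \<le> card (proper_L_colorings V E L')"
    using assms(1) list_color_fun_le[of V L' m E] by (simp add: num_L_colorings_def)
  then have "proper_L_colorings V E L' \<noteq> {}"
    by auto
  moreover have "proper_L_colorings V E L' \<subseteq> proper_L_colorings V E L"
    using L' by (intro proper_L_colorings_mono) blast
  ultimately show ?thesis by blast
qed

lemma two_le_card_proper_L_colorings_if_long_list:
  assumes "finite V" and "1 \<le> list_color_fun V E m"
    and lists: "\<And>v. v \<in> V \<Longrightarrow> finite (L v) \<and> m \<le> card (L v)"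
    and "u \<in> V" and "m < card (L u)"
  shows "2 \<le> card (proper_L_colorings V E L)"
proof -
  obtain f where f: "f \<in> proper_L_colorings V E L"
    using proper_L_colorings_nonempty[of V E m L] assms(2) lists by blast
  \<comment> \<open>forbidding the colour of f at u still leaves lists of size at least m\<close>
  define L' where "L' = L(u := L u - {f u})"
  have "\<And>v. v \<in> V \<Longrightarrow> finite (L' v) \<and> m \<le> card (L' v)"
    using lists assms(5) by (auto simp: L'_def card_Diff_singleton_if)
  then obtain g where g: "g \<in> proper_L_colorings V E L'"
    using proper_L_colorings_nonempty[of V E m L'] assms(2) by blast
  have sub: "proper_L_colorings V E L' \<subseteq> proper_L_colorings V E L"
    by (rule proper_L_colorings_mono) (auto simp: L'_def)
  have "g u \<noteq> f u"
    using g \<open>u \<in> V\<close> by (auto simp: proper_L_colorings_def L'_def PiE_iff)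
  then have "card {f, g} = 2"
    by (metis card_2_iff)
  moreover have "{f, g} \<subseteq> proper_L_colorings V E L"
    using f g sub by blast
  moreover have "finite (proper_L_colorings V E L)"
    using finite_proper_L_colorings assms(1) lists by blast
  ultimately show ?thesis
    using card_mono by metis
qed

lemma ex_edge_if_chromatic_number_gt_1:
  assumes "finite V" and "1 < chromatic_number V E"
  shows "\<exists>p q. E p q"
proof (rule ccontr)
  assume "\<nexists>p q. E p q"
  then have "restrict (\<lambda>_. 0) V \<in> proper_L_colorings V E (\<lambda>_. {0..<1})"
    by (simp add: proper_L_colorings_def restrict_PiE_iff)
  moreover have "finite (proper_L_colorings V E (\<lambda>_. {0..<1}))"
    using assms(1) by (simp add: finite_proper_L_colorings)
  ultimately have "0 < chrom_poly V E 1"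
    unfolding chrom_poly_def num_L_colorings_def by (auto simp: card_gt_0_iff)
  then have "chromatic_number V E \<le> 1"
    unfolding chromatic_number_def by (rule Least_le)
  with assms(2) show False
    by simp
qed

lemma bipartition_of_proper_2_coloring:
  assumes "graph V E" and "\<phi> \<in> proper_L_colorings V E (\<lambda>_. {0..<2})" and "E u v"
  shows "u \<in> {w. \<phi> w = 0} \<longleftrightarrow> v \<notin> {w. \<phi> w = 0}"
proof -
  have "u \<in> V" "v \<in> V"
    using assms(1,3) unfolding graph_def by auto
  then have "\<phi> u < 2" "\<phi> v < 2" "\<phi> u \<noteq> \<phi> v"
    using assms(2,3) unfolding proper_L_colorings_def by auto
  then show ?thesis
    by auto
qed

lemma side_coloring_in_proper_L_colorings:
  assumes "graph V E"
    and side: "\<And>u v. E u v \<Longrightarrow> u \<in> S \<longleftrightarrow> v \<notin> S"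
    and common: "\<And>v. v \<in> V \<Longrightarrow> y \<in> L v"
    and other: "\<And>v. v \<in> V \<Longrightarrow> c v \<in> L v - {y}"
  shows "restrict (\<lambda>v. if v \<in> S then y else c v) V \<in> proper_L_colorings V E L"
  unfolding proper_L_colorings_def
proof (intro CollectI conjI allI impI)
  show "restrict (\<lambda>v. if v \<in> S then y else c v) V \<in> PiE V L"
    using common other by (simp add: restrict_PiE_iff)
next
  fix u v assume "E u v"
  then have "u \<in> V" "v \<in> V" "u \<in> S \<longleftrightarrow> v \<notin> S"
    using assms(1) side unfolding graph_def by auto
  moreover have "c u \<noteq> y" "c v \<noteq> y"
    using other \<open>u \<in> V\<close> \<open>v \<in> V\<close> by auto
  ultimately show "restrict (\<lambda>v. if v \<in> S then y else c v) V u
      \<noteq> restrict (\<lambda>v. if v \<in> S then y else c v) V v"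
    by auto
qed

lemma ex_color_avoiding:
  assumes "\<And>v. v \<in> V \<Longrightarrow> finite (L v) \<and> 2 \<le> card (L v)"
  shows "\<exists>c. \<forall>v\<in>V. c v \<in> L v - {y}"
proof -
  have "\<exists>c. c \<in> L v - {y}" if "v \<in> V" for v
  proof -
    have "1 \<le> card (L v - {y})"
      using assms[OF that] by (auto simp: card_Diff_singleton_if)
    then show ?thesis
      by (metis card.empty ex_in_conv not_one_le_zero)
  qed
  then have "\<forall>v\<in>V. \<exists>c. c \<in> L v - {y}"
    by blast
  then show ?thesis
    by (rule bchoice)
qed

lemma card_proper_L_colorings_common_color_outside:
  assumes "graph V E"
    and side: "\<And>u v. E u v \<Longrightarrow> u \<in> S \<longleftrightarrow> v \<notin> S"
    and common: "\<And>v. v \<in> V \<Longrightarrow> y \<in> L v"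
    and lists: "\<And>v. v \<in> V \<Longrightarrow> finite (L v) \<and> 2 \<le> card (L v)"
    and "u \<in> V" and "u \<notin> S"
  shows "2 \<le> card (proper_L_colorings V E L)"
    and "3 \<le> card (L u) \<Longrightarrow> 3 \<le> card (proper_L_colorings V E L)"
proof -
  obtain c where c: "\<forall>v\<in>V. c v \<in> L v - {y}"
    using ex_color_avoiding[of V L y] lists by blast
  \<comment> \<open>y on one side of the bipartition, other colours on the other side;
    swapping the sides gives a second colouring\<close>
  define col where "col T c' = restrict (\<lambda>v. if v \<in> T then y else c' v) V" for T c'
  have col: "col T c' \<in> proper_L_colorings V E L"
    if "\<And>u v. E u v \<Longrightarrow> u \<in> T \<longleftrightarrow> v \<notin> T" and "\<forall>v\<in>V. c' v \<in> L v - {y}" for T c'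
    unfolding col_def using side_coloring_in_proper_L_colorings[OF assms(1)] that common by blast
  have side': "E u v \<Longrightarrow> u \<in> - S \<longleftrightarrow> v \<notin> - S" for u v
    using side by auto
  have fin: "finite (proper_L_colorings V E L)"
    using assms(1) lists unfolding graph_def by (auto intro: finite_proper_L_colorings)
  have at_u: "col S c u = c u" "col (- S) c u = y"
    using \<open>u \<in> V\<close> \<open>u \<notin> S\<close> by (simp_all add: col_def)
  have "c u \<noteq> y"
    using c \<open>u \<in> V\<close> by blast
  then have "col S c \<noteq> col (- S) c"
    using at_u by auto
  then have "card {col S c, col (- S) c} = 2"
    by simp
  moreover have "{col S c, col (- S) c} \<subseteq> proper_L_colorings V E L"
    using col[OF side c] col[OF side' c] by blast
  ultimately show "2 \<le> card (proper_L_colorings V E L)"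
    using fin card_mono by metis
  assume "3 \<le> card (L u)"
  \<comment> \<open>the neighbours of u all carry y, so u may take any third colour of its list\<close>
  have "card {y, c u} \<le> 2"
    by (cases "y = c u") auto
  then have "\<not> L u \<subseteq> {y, c u}"
    using \<open>3 \<le> card (L u)\<close> card_mono[of "{y, c u}" "L u"] by auto
  then obtain d where d: "d \<in> L u" "d \<noteq> y" "d \<noteq> c u"
    by blast
  have c': "\<forall>v\<in>V. (c(u := d)) v \<in> L v - {y}"
    using c d by auto
  have "col S (c(u := d)) u = d"
    using \<open>u \<in> V\<close> \<open>u \<notin> S\<close> by (simp add: col_def)
  then have "col S (c(u := d)) \<noteq> col S c" "col S (c(u := d)) \<noteq> col (- S) c"
    using at_u d by auto
  then have "card {col S c, col (- S) c, col S (c(u := d))} = 3"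
    using \<open>col S c \<noteq> col (- S) c\<close> by simp
  moreover have "{col S c, col (- S) c, col S (c(u := d))} \<subseteq> proper_L_colorings V E L"
    using col[OF side c] col[OF side' c] col[OF side c'] by blast
  ultimately show "3 \<le> card (proper_L_colorings V E L)"
    using fin card_mono by metis
qed

lemma card_proper_L_colorings_common_color:
  assumes "graph V E"
    and side: "\<And>u v. E u v \<Longrightarrow> u \<in> S \<longleftrightarrow> v \<notin> S"
    and "\<And>v. v \<in> V \<Longrightarrow> y \<in> L v"
    and "\<And>v. v \<in> V \<Longrightarrow> finite (L v) \<and> 2 \<le> card (L v)"
    and "u \<in> V"
  shows "2 \<le> card (proper_L_colorings V E L)"
    and "3 \<le> card (L u) \<Longrightarrow> 3 \<le> card (proper_L_colorings V E L)"
proof -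
  obtain T where T: "\<And>u v. E u v \<Longrightarrow> u \<in> T \<longleftrightarrow> v \<notin> T" and "u \<notin> T"
  proof (cases "u \<in> S")
    case True
    then show ?thesis using that[of "- S"] side by auto
  next
    case False
    then show ?thesis using that[of S] side by auto
  qed
  then show "2 \<le> card (proper_L_colorings V E L)"
    and "3 \<le> card (L u) \<Longrightarrow> 3 \<le> card (proper_L_colorings V E L)"
    using card_proper_L_colorings_common_color_outside[OF assms(1) T assms(3-5) \<open>u \<notin> T\<close>]
    by simp_all
qed

lemma proper_L_colorings_join_K1:
  assumes "graph V E"
  shows "proper_L_colorings (join_K1_V V) (join_K1_E V E) L =
    (\<Union>x\<in>L None. case_option x ` proper_L_colorings V E (\<lambda>v. L (Some v) - {x}))"
    (is "?H = ?U")
proof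
  show "?U \<subseteq> ?H"
  proof clarify
    fix x g assume x: "x \<in> L None" and "g \<in> proper_L_colorings V E (\<lambda>v. L (Some v) - {x})"
    then have g: "g \<in> PiE V (\<lambda>v. L (Some v) - {x})" and gE: "\<And>u v. E u v \<Longrightarrow> g u \<noteq> g v"
      unfolding proper_L_colorings_def by auto
    have "case_option x g \<in> PiE (join_K1_V V) L"
      using g x by (auto simp: PiE_iff extensional_def join_K1_V_def split: option.split)
    moreover have "case_option x g a \<noteq> case_option x g b" if "join_K1_E V E a b" for a b
      using that g gE by (auto simp: join_K1_E_def PiE_iff split: option.splits)
    ultimately show "case_option x g \<in> ?H"
      unfolding proper_L_colorings_def by blast
  qed
next
  show "?H \<subseteq> ?U"
  proof
    fix h assume "h \<in> ?H"
    then have h: "h \<in> PiE (join_K1_V V) L" and hE: "\<And>a b. join_K1_E V E a b \<Longrightarrow> h a \<noteq> h b"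
      unfolding proper_L_colorings_def by auto
    have "h None \<in> L None"
      using h by (auto simp: join_K1_V_def)
    moreover have "h \<circ> Some \<in> proper_L_colorings V E (\<lambda>v. L (Some v) - {h None})"
    proof -
      have "h (Some v) \<noteq> h None" if "v \<in> V" for v
        using hE[of "Some v" None] that by (simp add: join_K1_E_def)
      then have "h \<circ> Some \<in> PiE V (\<lambda>v. L (Some v) - {h None})"
        using h by (auto simp: PiE_iff extensional_def join_K1_V_def)
      moreover have "(h \<circ> Some) u \<noteq> (h \<circ> Some) v" if "E u v" for u v
        using hE[of "Some u" "Some v"] that by (simp add: join_K1_E_def)
      ultimately show ?thesis
        unfolding proper_L_colorings_def by blast
    qed
    moreover have "h = case_option (h None) (h \<circ> Some)"
      by (simp add: fun_eq_iff split: option.split)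
    ultimately show "h \<in> ?U"
      by blast
  qed
qed

lemma card_proper_L_colorings_join_K1:
  assumes "graph V E" and "finite (L None)" and "\<And>v. v \<in> V \<Longrightarrow> finite (L (Some v))"
  shows "card (proper_L_colorings (join_K1_V V) (join_K1_E V E) L) =
    (\<Sum>x\<in>L None. card (proper_L_colorings V E (\<lambda>v. L (Some v) - {x})))"
proof -
  let ?P = "\<lambda>x. proper_L_colorings V E (\<lambda>v. L (Some v) - {x})"
  have fin: "finite (?P x)" for x
    using assms(1,3) unfolding graph_def by (auto intro: finite_proper_L_colorings)
  have inj: "inj (case_option x :: ('a \<Rightarrow> nat) \<Rightarrow> 'a option \<Rightarrow> nat)" for x
  proof (rule injI)
    fix f g :: "'a \<Rightarrow> nat" assume "case_option x f = case_option x g"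
    then have "case_option x f (Some v) = case_option x g (Some v)" for v
      by simp
    then show "f = g"
      by auto
  qed
  have "card (\<Union>x\<in>L None. case_option x ` ?P x) = (\<Sum>x\<in>L None. card (case_option x ` ?P x))"
    using assms(2) fin by (intro card_UN_disjoint) (auto dest: fun_cong[where x = None])
  also have "\<dots> = (\<Sum>x\<in>L None. card (?P x))"
    by (intro sum.cong refl card_image inj_on_subset[OF inj subset_UNIV])
  finally show ?thesis
    using proper_L_colorings_join_K1[OF assms(1)] by simp
qed

lemma card_proper_L_colorings_connected_le_2:
  assumes "graph V E" and "connected_graph V E" and "card K = 2"
  shows "card (proper_L_colorings V E (\<lambda>_. K)) \<le> 2"
proof -
  obtain v0 where "v0 \<in> V"
    using assms(2) unfolding connected_graph_def by blast
  obtain a b where K: "K = {a, b}"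
    using assms(3) by (auto simp: card_2_iff)
  \<comment> \<open>with only two colours, a colouring of a connected graph is determined by its value at v0\<close>
  have "inj_on (\<lambda>f. f v0) (proper_L_colorings V E (\<lambda>_. K))"
  proof (rule inj_onI)
    fix f g assume f: "f \<in> proper_L_colorings V E (\<lambda>_. K)" and g: "g \<in> proper_L_colorings V E (\<lambda>_. K)"
      and "f v0 = g v0"
    have "f v = g v" if "E\<^sup>*\<^sup>* v0 v" for v
      using that
    proof (induction rule: rtranclp_induct)
      case base
      show ?case by fact
    next
      case (step u v)
      then have "u \<in> V" "v \<in> V"
        using assms(1) unfolding graph_def by auto
      then have "f u \<noteq> f v" "g u \<noteq> g v" "f u \<in> K" "f v \<in> K" "g v \<in> K"
        using f g \<open>E u v\<close> unfolding proper_L_colorings_def by auto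
      then show ?case
        using \<open>f u = g u\<close> unfolding K by auto
    qed
    moreover have "E\<^sup>*\<^sup>* v0 v" if "v \<in> V" for v
      using assms(2) \<open>v0 \<in> V\<close> that unfolding connected_graph_def by blast
    ultimately show "f = g"
      using f g unfolding proper_L_colorings_def by (auto intro: PiE_ext)
  qed
  moreover have "(\<lambda>f. f v0) ` proper_L_colorings V E (\<lambda>_. K) \<subseteq> K"
    using \<open>v0 \<in> V\<close> unfolding proper_L_colorings_def by auto
  ultimately show ?thesis
    using assms(3) card_inj_on_le[of _ _ K] by (metis card.infinite zero_neq_numeral)
qed

lemma six_le_sum_of_three:
  fixes N :: "'b \<Rightarrow> nat"
  assumes "card A = 3"
    and "\<And>x. x \<in> A \<Longrightarrow> 1 + of_bool (\<not> C x) + of_bool (\<exists>y\<in>A - {x}. C y) \<le> N x"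
  shows "6 \<le> sum N A"
proof -
  obtain a b c where A: "A = {a, b, c}" "a \<noteq> b" "b \<noteq> c" "a \<noteq> c"
    using assms(1) by (auto simp: card_3_iff)
  have "A - {a} = {b, c}" "A - {b} = {a, c}" "A - {c} = {a, b}"
    using A by auto
  then have "1 + of_bool (\<not> C a) + of_bool (C b \<or> C c) \<le> N a"
    and "1 + of_bool (\<not> C b) + of_bool (C a \<or> C c) \<le> N b"
    and "1 + of_bool (\<not> C c) + of_bool (C a \<or> C b) \<le> N c"
    using assms(2)[of a] assms(2)[of b] assms(2)[of c] A(1) by simp_all
  then show ?thesis
    using A by (cases "C a"; cases "C b"; cases "C c") simp_all
qed

lemma card_proper_L_colorings_remove_color:
  assumes "graph V E" and "V \<noteq> {}"
    and side: "\<And>u v. E u v \<Longrightarrow> u \<in> S \<longleftrightarrow> v \<notin> S"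
    and "1 \<le> list_color_fun V E 2"
    and lists: "\<And>v. v \<in> V \<Longrightarrow> finite (L v) \<and> card (L v) = 3"
  shows "1 + of_bool (\<not> (\<forall>v\<in>V. x \<in> L v)) + of_bool (\<exists>y. y \<noteq> x \<and> (\<forall>v\<in>V. y \<in> L v))
    \<le> card (proper_L_colorings V E (\<lambda>v. L v - {x}))"
proof -
  let ?L = "\<lambda>v. L v - {x}"
  have lists': "finite (?L v) \<and> 2 \<le> card (?L v)" if "v \<in> V" for v
    using lists[OF that] by (auto simp: card_Diff_singleton_if)
  have long: "3 \<le> card (?L u)" if "u \<in> V" "x \<notin> L u" for u
    using lists[OF that(1)] that(2) by simp
  consider (common) y where "y \<noteq> x" "\<forall>v\<in>V. y \<in> L v"
    | (no_common) "\<not> (\<exists>y. y \<noteq> x \<and> (\<forall>v\<in>V. y \<in> L v))"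
    by blast
  then show ?thesis
  proof cases
    case common
    then have y: "y \<in> ?L v" if "v \<in> V" for v
      using that by blast
    obtain u where "u \<in> V"
      using assms(2) by blast
    have "2 \<le> card (proper_L_colorings V E ?L)"
      by (rule card_proper_L_colorings_common_color(1)[where S = S and y = y and u = u])
        (use assms(1) side y lists' \<open>u \<in> V\<close> in auto)
    moreover have "3 \<le> card (proper_L_colorings V E ?L)" if "x \<notin> L u" "u \<in> V" for u
      by (rule card_proper_L_colorings_common_color(2)[where S = S and y = y and u = u])
        (use assms(1) side y lists' long that in auto)
    ultimately show ?thesis
      using common by (auto simp: eval_nat_numeral)
  next
    case no_common
    have "proper_L_colorings V E ?L \<noteq> {}"
      using proper_L_colorings_nonempty[of V E 2 ?L] assms(4) lists' by blast
    moreover have "finite (proper_L_colorings V E ?L)"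
      using assms(1) lists' unfolding graph_def by (auto intro: finite_proper_L_colorings)
    ultimately have "1 \<le> card (proper_L_colorings V E ?L)"
      by (simp add: Suc_le_eq card_gt_0_iff)
    moreover have "2 \<le> card (proper_L_colorings V E ?L)" if "x \<notin> L u" "u \<in> V" for u
      using two_le_card_proper_L_colorings_if_long_list[of V E 2 ?L u] assms(1,4) lists' long that
      unfolding graph_def by force
    ultimately show ?thesis
      using no_common by (auto simp: eval_nat_numeral)
  qed
qed

lemma num_L_colorings_join_K1_ge_6:
  assumes "graph V E" and "V \<noteq> {}"
    and side: "\<And>u v. E u v \<Longrightarrow> u \<in> S \<longleftrightarrow> v \<notin> S"
    and "1 \<le> list_color_fun V E 2"
    and L: "m_assignment (join_K1_V V) L 3"
  shows "6 \<le> num_L_colorings (join_K1_V V) (join_K1_E V E) L"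
proof -
  have apex: "finite (L None)" "card (L None) = 3"
    using L by (simp_all add: m_assignment_def join_K1_V_def)
  have lists: "finite (L (Some v)) \<and> card (L (Some v)) = 3" if "v \<in> V" for v
    using L that by (simp add: m_assignment_def join_K1_V_def)
  define common where "common y \<longleftrightarrow> (\<forall>v\<in>V. y \<in> L (Some v))" for y
  have bound: "1 + of_bool (\<not> common x) + of_bool (\<exists>y\<in>L None - {x}. common y)
      \<le> card (proper_L_colorings V E (\<lambda>v. L (Some v) - {x}))" for x
  proof -
    have "1 + of_bool (\<not> common x) + of_bool (\<exists>y. y \<noteq> x \<and> common y)
        \<le> card (proper_L_colorings V E (\<lambda>v. L (Some v) - {x}))"
      unfolding common_def
      by (rule card_proper_L_colorings_remove_color[where S = S]) (use assms(1-4) lists in auto)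
    moreover have "of_bool (\<exists>y\<in>L None - {x}. common y) \<le> (of_bool (\<exists>y. y \<noteq> x \<and> common y) :: nat)"
      by auto
    ultimately show ?thesis
      by linarith
  qed
  have "6 \<le> (\<Sum>x\<in>L None. card (proper_L_colorings V E (\<lambda>v. L (Some v) - {x})))"
    by (rule six_le_sum_of_three[OF apex(2), where C = common]) (rule bound)
  also have "\<dots> = num_L_colorings (join_K1_V V) (join_K1_E V E) L"
    unfolding num_L_colorings_def using card_proper_L_colorings_join_K1 assms(1) apex(1) lists
    by metis
  finally show ?thesis .
qed

lemma chrom_poly_join_K1_le_6:
  assumes "graph V E" and "connected_graph V E"
  shows "chrom_poly (join_K1_V V) (join_K1_E V E) 3 \<le> 6"
proof -
  have "chrom_poly (join_K1_V V) (join_K1_E V E) 3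
      = (\<Sum>x\<in>{0..<3}. card (proper_L_colorings V E (\<lambda>_. {0..<3} - {x})))"
    unfolding chrom_poly_def num_L_colorings_def
    using card_proper_L_colorings_join_K1[OF assms(1), of "\<lambda>_. {0..<3}"] by simp
  also have "\<dots> \<le> (\<Sum>x\<in>{0..<3::nat}. 2)"
    using card_proper_L_colorings_connected_le_2[OF assms] by (intro sum_mono) simp
  finally show ?thesis
    by simp
qed

lemma chromatic_number_join_K1:
  assumes "graph V E" and "E p q" and "proper_L_colorings V E (\<lambda>_. {0..<2}) \<noteq> {}"
  shows "chromatic_number (join_K1_V V) (join_K1_E V E) = 3"
  unfolding chromatic_number_def
proof (rule Least_equality)
  let ?L = "\<lambda>_. {0..<3} :: nat set"
  have "proper_L_colorings V E (\<lambda>_. {0..<2}) \<subseteq> proper_L_colorings V E (\<lambda>v. ?L (Some v) - {2})"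
    by (rule proper_L_colorings_mono) auto
  then have "proper_L_colorings (join_K1_V V) (join_K1_E V E) ?L \<noteq> {}"
    using assms(3) proper_L_colorings_join_K1[OF assms(1), of ?L] by auto
  moreover have "finite (proper_L_colorings (join_K1_V V) (join_K1_E V E) ?L)"
    using assms(1) unfolding graph_def join_K1_V_def by (auto intro: finite_proper_L_colorings)
  ultimately show "0 < chrom_poly (join_K1_V V) (join_K1_E V E) 3"
    unfolding chrom_poly_def num_L_colorings_def by (simp add: card_gt_0_iff)
next
  fix k assume "0 < chrom_poly (join_K1_V V) (join_K1_E V E) k"
  then obtain h where h: "h \<in> proper_L_colorings (join_K1_V V) (join_K1_E V E) (\<lambda>_. {0..<k})"
    unfolding chrom_poly_def num_L_colorings_def by (metis card.empty ex_in_conv less_irrefl)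
  have "p \<in> V" "q \<in> V"
    using assms(1,2) unfolding graph_def by auto
  then have "h None \<noteq> h (Some p)" "h None \<noteq> h (Some q)" "h (Some p) \<noteq> h (Some q)"
      and "h None < k" "h (Some p) < k" "h (Some q) < k"
    using h assms(2) by (auto simp: proper_L_colorings_def join_K1_E_def join_K1_V_def PiE_iff)
  then show "3 \<le> k"
    by linarith
qed

theorem proposition27:
  fixes V :: "'a set" and E :: "'a \<Rightarrow> 'a \<Rightarrow> bool"
  assumes "graph V E"
    and "connected_graph V E"
    and "chromatic_number V E = 2"
    and "list_color_fun V E 2 \<ge> 1"
  shows "weakly_ecc (join_K1_V V) (join_K1_E V E)"
proof -
  have "finite V" and "V \<noteq> {}"
    using assms(1,2) unfolding graph_def connected_graph_def by auto
  obtain p q where "E p q"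
    using ex_edge_if_chromatic_number_gt_1[OF \<open>finite V\<close>, of E] assms(3) by auto
  obtain \<phi> where \<phi>: "\<phi> \<in> proper_L_colorings V E (\<lambda>_. {0..<2})"
    using proper_L_colorings_nonempty[OF assms(4), of "\<lambda>_. {0..<2}"] by auto
  note side = bipartition_of_proper_2_coloring[OF assms(1) \<phi>]
  have "chromatic_number (join_K1_V V) (join_K1_E V E) = 3"
    using chromatic_number_join_K1[OF assms(1) \<open>E p q\<close>] \<phi> by blast
  moreover have "chrom_poly (join_K1_V V) (join_K1_E V E) 3 \<le> num_L_colorings (join_K1_V V) (join_K1_E V E) L"
    if "m_assignment (join_K1_V V) L 3" for L
    using chrom_poly_join_K1_le_6[OF assms(1,2)]
      num_L_colorings_join_K1_ge_6[OF assms(1) \<open>V \<noteq> {}\<close> side assms(4) that]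
    by linarith
  ultimately show ?thesis
    unfolding weakly_ecc_def by (simp add: list_color_fun_eq_chrom_poly_iff)
qed

end
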